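(* Let $N\ge1$, $k\in\{1,\dots,N\}$, $\mathcal{I}_k:=\big((N-2k)\frac{\pi}{2},(N-2(k-1))\frac{\pi}{2}\big)$, and $G(A):=\sum_{i=1}^N\arctan(\lambda_i(A))$ for $A\in\mathcal{S}(N)$. For every compact set $\Sigma\subset\mathcal{I}_k$ there exists $C=C(\Sigma)>0$ such that every $A\in\mathcal{S}(N)$ with $G(A)\in\Sigma$ satisfies $|\lambda_j(A)|\le C$ for some $j=j_A\in\{1,\dots,N\}$.
   Context: $\mathcal{S}(N)$ is the space of real symmetric $N\times N$ matrices and $\lambda_1(A)\le\dots\le\lambda_N(A)$ are the eigenvalues of $A$. *)

theory Defs
  imports "Jordan_Normal_Form.Char_Poly" "HOL-Analysis.Analysis"
begin

definition sym_mats :: "nat \<Rightarrow> real mat set" where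
  "sym_mats N = {A. A \<in> carrier_mat N N \<and> transpose_mat A = A}"

text \<open>The eigenvalues of A, listed with algebraic multiplicity in nondecreasing order:
  the unique sorted list whose linear factors multiply to the characteristic polynomial
  (it exists for real symmetric matrices).\<close>
definition eig_list :: "real mat \<Rightarrow> real list" where
  "eig_list A = (THE ev. sorted ev \<and> length ev = dim_row A \<and>
      char_poly A = prod_list (map (\<lambda>a. [:- a, 1:]) ev))"

text \<open>lambda_i(A) for i = 1..N (1-based).\<close>
definition eig :: "real mat \<Rightarrow> nat \<Rightarrow> real" where
  "eig A i = eig_list A ! (i - 1)"

definition Gfun :: "nat \<Rightarrow> real mat \<Rightarrow> real" where
  "Gfun N A = (\<Sum>i=1..N. arctan (eig A i))"

end

theory Submission
  imports Defs
begin

text \<open>Nothing about matrices is used: the bound holds for any N reals whose arctangents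
  sum to a point of \<Sigma>. If all of them exceed C = tan (pi/2 - \<eta>) in absolute value, each
  arctangent lies within \<eta> of \<plusminus>pi/2, so the sum lies within N\<eta> of (N - 2m) pi/2, where m
  counts the negative ones. No such point lies in the open interval, so taking N\<eta> below the
  distance from the compact set \<Sigma> to its endpoints gives a contradiction.\<close>

lemma arctan_gt_pi_half_minus:
  fixes \<eta> t :: real
  assumes "0 < \<eta>" "\<eta> < pi" "tan (pi/2 - \<eta>) < t"
  shows "pi/2 - \<eta> < arctan t"
proof -
  have "arctan (tan (pi/2 - \<eta>)) = pi/2 - \<eta>"
    using assms(1,2) by (intro arctan_tan) auto
  with assms(3) show ?thesis by (metis arctan_less_iff)
qed

lemma abs_arctan_minus_sgn_pi_half_less:
  fixes \<eta> y :: real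
  assumes "0 < \<eta>" "\<eta> < pi" "tan (pi/2 - \<eta>) < \<bar>y\<bar>"
  shows "\<bar>arctan y - sgn y * pi/2\<bar> < \<eta>"
proof (cases y "0 :: real" rule: linorder_cases)
  case less
  then have "pi/2 - \<eta> < arctan (- y)"
    using assms by (intro arctan_gt_pi_half_minus) auto
  with less arctan_ubound[of "- y"] show ?thesis by (simp add: arctan_minus)
next
  case greater
  then have "pi/2 - \<eta> < arctan y"
    using assms by (intro arctan_gt_pi_half_minus) auto
  with greater arctan_ubound[of y] show ?thesis by simp
qed (use assms in simp)

lemma sum_sgn_eq_card_minus_twice_card_neg:
  fixes f :: "'a \<Rightarrow> real"
  assumes "finite I" "\<forall>i\<in>I. f i \<noteq> 0"
  shows "(\<Sum>i\<in>I. sgn (f i)) = real (card I) - 2 * real (card {i\<in>I. f i < 0})"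
proof -
  let ?neg = "{i\<in>I. f i < 0}"
  have "(\<Sum>i\<in>I. sgn (f i)) = (\<Sum>i\<in>I. if f i < 0 then -1 else 1)"
    using assms(2) by (intro sum.cong) (auto simp: sgn_if)
  also have "\<dots> = real (card (I - ?neg)) - real (card ?neg)"
  proof -
    have "I - ?neg = I \<inter> - {i. f i < 0}" "?neg = I \<inter> {i. f i < 0}" by auto
    then show ?thesis using assms(1) by (simp add: sum.If_cases)
  qed
  also have "card (I - ?neg) = card I - card ?neg"
    using assms(1) by (intro card_Diff_subset) auto
  also have "card ?neg \<le> card I"
    using assms(1) by (intro card_mono) auto
  ultimately show ?thesis by (simp add: of_nat_diff)
qed

lemma sum_arctan_close_to_half_pi_multiple:
  fixes f :: "'a \<Rightarrow> real" and \<eta> :: real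
  assumes "finite I" "I \<noteq> {}" "0 < \<eta>" "\<eta> \<le> pi/2" "\<forall>i\<in>I. tan (pi/2 - \<eta>) < \<bar>f i\<bar>"
  shows "\<exists>m\<le>card I.
    \<bar>(\<Sum>i\<in>I. arctan (f i)) - (real (card I) - 2 * real m) * pi/2\<bar> < card I * \<eta>"
proof (intro exI conjI)
  let ?m = "card {i\<in>I. f i < 0}"
  show "?m \<le> card I"
    using assms(1) by (intro card_mono) auto
  have "0 \<le> tan (pi/2 - \<eta>)"
  proof (cases "\<eta> = pi/2")
    case False
    then show ?thesis using assms(3,4) by (intro less_imp_le tan_gt_zero) auto
  qed (simp add: field_simps)
  then have nonzero: "\<forall>i\<in>I. f i \<noteq> 0"
    using assms(5) by fastforce
  have "(real (card I) - 2 * real ?m) * pi/2 = (\<Sum>i\<in>I. sgn (f i) * pi/2)"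
    by (simp add: sum_sgn_eq_card_minus_twice_card_neg[OF assms(1) nonzero]
        sum_distrib_right[symmetric] sum_divide_distrib[symmetric])
  then have "\<bar>(\<Sum>i\<in>I. arctan (f i)) - (real (card I) - 2 * real ?m) * pi/2\<bar>
      = \<bar>\<Sum>i\<in>I. arctan (f i) - sgn (f i) * pi/2\<bar>"
    by (simp add: sum_subtractf)
  also have "\<dots> \<le> (\<Sum>i\<in>I. \<bar>arctan (f i) - sgn (f i) * pi/2\<bar>)"
    by (rule sum_abs)
  also have "\<dots> < (\<Sum>i\<in>I. \<eta>)"
    using assms pi_gt_zero
    by (intro sum_strict_mono abs_arctan_minus_sgn_pi_half_less) auto
  finally show "\<bar>(\<Sum>i\<in>I. arctan (f i)) - (real (card I) - 2 * real ?m) * pi/2\<bar> < card I * \<eta>"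
    by simp
qed

lemma compact_subset_interval_margin:
  fixes \<Sigma> :: "real set"
  assumes "compact \<Sigma>" "\<Sigma> \<subseteq> {a<..<b}"
  obtains \<epsilon> where "\<epsilon> > 0" "\<forall>x\<in>\<Sigma>. a + \<epsilon> \<le> x \<and> x \<le> b - \<epsilon>"
proof (cases "\<Sigma> = {}")
  case False
  obtain lo where lo: "lo \<in> \<Sigma>" "\<forall>x\<in>\<Sigma>. lo \<le> x"
    using compact_attains_inf[OF assms(1) False] by blast
  obtain hi where hi: "hi \<in> \<Sigma>" "\<forall>x\<in>\<Sigma>. x \<le> hi"
    using compact_attains_sup[OF assms(1) False] by blast
  show ?thesis
    using lo hi assms(2) by (intro that[of "min (lo - a) (b - hi)"]) auto
next
  case True
  then show ?thesis by (intro that[of 1]) auto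
qed

lemma half_pi_multiple_notin_interval:
  fixes N k m :: nat
  shows "(real N - 2 * real m) * pi / 2
    \<notin> {(real N - 2 * real k) * pi / 2 <..< (real N - 2 * (real k - 1)) * pi / 2}"
proof (cases "k \<le> m")
  case True
  then have "(real N - 2 * real m) * pi / 2 \<le> (real N - 2 * real k) * pi / 2"
    by (intro divide_right_mono mult_right_mono) auto
  then show ?thesis by simp
next
  case False
  then have "(real N - 2 * (real k - 1)) * pi / 2 \<le> (real N - 2 * real m) * pi / 2"
    by (intro divide_right_mono mult_right_mono) auto
  then show ?thesis by simp
qed

theorem lemma6p19:
  fixes N k :: nat and \<Sigma> :: "real set"
  assumes "N \<ge> 1" and "k \<in> {1..N}"
    and "compact \<Sigma>"
    and "\<Sigma> \<subseteq> {(real N - 2 * real k) * pi / 2 <..< (real N - 2 * (real k - 1)) * pi / 2}"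
  shows "\<exists>C>0. \<forall>A\<in>sym_mats N. Gfun N A \<in> \<Sigma> \<longrightarrow> (\<exists>j\<in>{1..N}. \<bar>eig A j\<bar> \<le> C)"
proof -
  obtain \<epsilon> where \<epsilon>: "\<epsilon> > 0"
    "\<forall>x\<in>\<Sigma>. (real N - 2 * real k) * pi / 2 + \<epsilon> \<le> x \<and> x \<le> (real N - 2 * (real k - 1)) * pi / 2 - \<epsilon>"
    using compact_subset_interval_margin[OF assms(3,4)] by blast
  define \<eta> where "\<eta> = min (\<epsilon> / N) (pi/4)"
  have \<eta>: "0 < \<eta>" "\<eta> < pi/2" "N * \<eta> \<le> \<epsilon>"
    using \<epsilon>(1) assms(1) pi_gt_zero by (auto simp: \<eta>_def min_def field_simps)
  define C where "C = tan (pi/2 - \<eta>)"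
  have "C > 0"
    using \<eta>(1,2) by (simp add: C_def tan_gt_zero)
  show ?thesis
  proof (intro exI[of _ C] conjI \<open>C > 0\<close> ballI impI)
    fix A assume G: "Gfun N A \<in> \<Sigma>"
    show "\<exists>j\<in>{1..N}. \<bar>eig A j\<bar> \<le> C"
    proof (rule ccontr)
      assume "\<not> ?thesis"
      then obtain m :: nat where close: "\<bar>Gfun N A - (real N - 2 * real m) * pi / 2\<bar> < N * \<eta>"
        using sum_arctan_close_to_half_pi_multiple[of "{1..N}" \<eta> "eig A"] assms(1) \<eta>(1,2)
        by (auto simp: Gfun_def C_def not_le)
      have "(real N - 2 * real m) * pi / 2 \<le> (real N - 2 * real k) * pi / 2
          \<or> (real N - 2 * (real k - 1)) * pi / 2 \<le> (real N - 2 * real m) * pi / 2"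
        using half_pi_multiple_notin_interval[of N m k] by auto
      then show False
        using close \<epsilon>(2)[rule_format, OF G] \<eta>(3) unfolding abs_less_iff
        by (elim disjE) linarith+
    qed
  qed
qed

end
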